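(* For every $A>0$ there is a constant $C$ depending only on $A$ such that if $|c|\le A$, then every $C^1$ solution $U$ of $(1-x^2)U'+2xU+\frac12U^2=P_c(x)$ in $(-1,1)$ satisfies $|U(x)|\le C$ for all $-1<x<1$.
   Context: $c=(c_1,c_2,c_3)\in\mathbb{R}^3$ and $P_c(x):=c_1(1-x)+c_2(1+x)+c_3(1-x^2)$. *)

theory Defs
  imports "HOL-Analysis.Analysis"
begin

definition P :: "real^3 \<Rightarrow> real \<Rightarrow> real" where
  "P c x = c$1 * (1 - x) + c$2 * (1 + x) + c$3 * (1 - x^2)"

end

theory Submission
  imports Defs
begin

text \<open>Where U is large the quadratic term dominates, so (1 - x^2) U' \<le> -U^2/4 there. Hence a
  solution exceeding 8 + max \<bar>Q\<bar> at some x0 stays above that value on (-1, x0], and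
  1/U - artanh/4 is nondecreasing there. Since artanh tends to -\<infinity> at -1, this forces
  1/U \<le> 0 near -1, a contradiction. The lower bound follows by applying the upper bound to
  -U(-x), which solves the equation with right-hand side Q(-x).\<close>

definition riccati_solution :: "(real \<Rightarrow> real) \<Rightarrow> (real \<Rightarrow> real) \<Rightarrow> (real \<Rightarrow> real) \<Rightarrow> bool" where
  "riccati_solution Q U U' \<longleftrightarrow>
     (\<forall>x\<in>{-1<..<1}. (U has_real_derivative U' x) (at x) \<and>
        (1 - x^2) * U' x + 2 * x * U x + (1/2) * (U x)^2 = Q x)"

lemma riccati_solution_reflect:
  assumes "riccati_solution Q U U'"
  shows "riccati_solution (\<lambda>x. Q (- x)) (\<lambda>x. - U (- x)) (\<lambda>x. U' (- x))"
  unfolding riccati_solution_def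
proof
  fix x :: real assume "x \<in> {-1<..<1}"
  then have "- x \<in> {-1<..<1}" by auto
  with assms have D: "(U has_real_derivative U' (- x)) (at (- x))"
    and E: "(1 - (- x)^2) * U' (- x) + 2 * (- x) * U (- x) + (1/2) * (U (- x))^2 = Q (- x)"
    unfolding riccati_solution_def by blast+
  have "((\<lambda>x. - U (- x)) has_real_derivative U' (- x)) (at x)"
    using DERIV_chain2[OF D DERIV_minus[OF DERIV_ident]] DERIV_minus by fastforce
  with E show "((\<lambda>x. - U (- x)) has_real_derivative U' (- x)) (at x) \<and>
      (1 - x^2) * U' (- x) + 2 * x * (- U (- x)) + (1/2) * (- U (- x))^2 = Q (- x)"
    by simp
qed

lemma quadratic_absorbs_bounded_terms:
  fixes t u q M :: real
  assumes "M \<ge> 0" and "\<bar>t\<bar> < 1" and "u \<ge> 8 + M" and "\<bar>q\<bar> \<le> M"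
  shows "q - 2 * t * u - (1/2) * u^2 \<le> - (u^2 / 4)"
proof -
  have u0: "u \<ge> 0" using assms by linarith
  have "(8 + M) * u \<le> u * u" using assms(3) u0 by (rule mult_right_mono)
  then have "8 * u + M * u \<le> u^2" by (simp add: distrib_right power2_eq_square)
  moreover have "M * 8 \<le> M * u" using assms by (intro mult_left_mono) auto
  moreover have "\<bar>t\<bar> * u \<le> 1 * u" using assms(2) u0 by (intro mult_right_mono) auto
  then have "\<bar>t * u\<bar> \<le> u" using u0 by (simp add: abs_mult)
  then have "- (2 * t * u) \<le> 2 * u" by linarith
  ultimately show ?thesis using assms(1,4) by linarith
qed

lemma riccati_derivative_le_where_large:
  assumes "riccati_solution Q U U'" and "M \<ge> 0" and "\<forall>x\<in>{-1<..<1}. \<bar>Q x\<bar> \<le> M"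
    and "t \<in> {-1<..<1}" and "U t \<ge> 8 + M"
  shows "(1 - t^2) * U' t \<le> - ((U t)^2 / 4)"
proof -
  have "(1 - t^2) * U' t = Q t - 2 * t * U t - (1/2) * (U t)^2"
    using assms(1,4) by (auto simp: riccati_solution_def algebra_simps)
  moreover have "\<bar>t\<bar> < 1" using assms(4) by auto
  ultimately show ?thesis
    using quadratic_absorbs_bounded_terms[OF assms(2) _ assms(5) bspec[OF assms(3,4)]] by simp
qed

lemma DERIV_neg_where_above_imp_ge_left:
  fixes f f' :: "real \<Rightarrow> real"
  assumes "x \<le> x0"
    and deriv: "\<And>t. t \<in> {x..x0} \<Longrightarrow> (f has_real_derivative f' t) (at t)"
    and neg: "\<And>t. t \<in> {x..x0} \<Longrightarrow> f t \<ge> f x0 \<Longrightarrow> f' t < 0"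
  shows "f x \<ge> f x0"
proof (rule ccontr)
  assume "\<not> f x \<ge> f x0"
  have "continuous_on {x..x0} f"
    using deriv by (intro continuous_at_imp_continuous_on ballI DERIV_isCont)
  then obtain m where m: "m \<in> {x..x0}" "\<forall>y\<in>{x..x0}. f y \<le> f m"
    using continuous_attains_sup[of "{x..x0}" f] assms(1) by auto
  have "f m \<ge> f x0" using m assms(1) by auto
  then have "m > x" using m(1) \<open>\<not> f x \<ge> f x0\<close> by (cases "m = x") auto
  obtain d where "d > 0" and d: "\<forall>h>0. h < d \<longrightarrow> f m < f (m - h)"
    using DERIV_neg_dec_left[OF deriv[OF m(1)] neg[OF m(1) \<open>f m \<ge> f x0\<close>]] by blast
  define h where "h = min (d/2) (m - x)"
  have "h > 0" "h < d" "m - h \<in> {x..x0}" using \<open>d > 0\<close> \<open>m > x\<close> m(1) by (auto simp: h_def)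
  then show False using d m(2) by force
qed

lemma quarter_inverse_le_divide:
  fixes a s u :: real
  assumes "a > 0" and "s > 0" and "s * u \<le> - (a / 4)"
  shows "1 / s / 4 \<le> - u / a"
proof -
  have "a / s / 4 \<le> - u" using assms(2,3) by (simp add: pos_divide_le_eq algebra_simps)
  then show ?thesis by (subst pos_le_divide_eq[OF assms(1)]) simp
qed

lemma inverse_minus_quarter_artanh_deriv_nonneg:
  fixes U :: "real \<Rightarrow> real"
  assumes "U t > 0" and "\<bar>t\<bar> < 1" and deriv: "(U has_real_derivative u) (at t)"
    and "(1 - t^2) * u \<le> - ((U t)^2 / 4)"
  shows "\<exists>y. ((\<lambda>t. 1 / U t - artanh t / 4) has_real_derivative y) (at t) \<and> 0 \<le> y"
proof -
  have pos: "1 - t^2 > 0" using assms(2) by (simp add: abs_square_less_1)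
  have "((\<lambda>t. 1 / U t - artanh t / 4) has_real_derivative
      (0 * U t - 1 * u) / (U t * U t) - 1 / (1 - t^2) / 4) (at t)"
    using assms(1,2)
    by (intro DERIV_diff DERIV_divide DERIV_cdivide DERIV_const deriv artanh_real_has_field_derivative) auto
  moreover have "1 / (1 - t^2) / 4 \<le> - u / (U t * U t)"
    using assms(1,4) pos by (intro quarter_inverse_le_divide) (auto simp: power2_eq_square)
  ultimately show ?thesis by auto
qed

lemma artanh_le_near_minus_one:
  fixes x0 B :: real
  assumes "x0 > -1"
  shows "\<exists>x\<in>{-1<..<x0}. artanh x \<le> B"
proof -
  have "\<forall>\<^sub>F x in at_right (-1). artanh x \<le> B"
    using artanh_real_at_right_1 by (simp add: filterlim_at_bot)
  moreover have "\<forall>\<^sub>F x in at_right (-1). x \<in> {-1<..<x0}"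
    using eventually_at_right_real[OF assms] .
  ultimately have "\<forall>\<^sub>F x in at_right (-1). artanh x \<le> B \<and> x \<in> {-1<..<x0}"
    by (rule eventually_conj)
  then show ?thesis
    using eventually_happens' trivial_limit_at_right_real by blast
qed

lemma riccati_upper_bound:
  assumes sol: "riccati_solution Q U U'" and "M \<ge> 0"
    and Q: "\<forall>x\<in>{-1<..<1}. \<bar>Q x\<bar> \<le> M" and x0: "x0 \<in> {-1<..<1}"
  shows "U x0 \<le> 8 + M"
proof (rule ccontr)
  assume "\<not> U x0 \<le> 8 + M"
  then have big: "U x0 > 8 + M" by simp
  have deriv: "(U has_real_derivative U' t) (at t)" if "t \<in> {-1<..<1}" for t
    using sol that by (simp add: riccati_solution_def)
  note slope = riccati_derivative_le_where_large[OF sol \<open>M \<ge> 0\<close> Q]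
  have above: "U t \<ge> U x0" if "t \<in> {-1<..x0}" for t
  proof (rule DERIV_neg_where_above_imp_ge_left[where f = U and f' = U'])
    fix s assume s: "s \<in> {t..x0}" "U s \<ge> U x0"
    then have sI: "s \<in> {-1<..<1}" and "1 - s^2 > 0"
      using that x0 by (auto simp: abs_square_less_1 abs_less_iff)
    moreover have "U s \<ge> 8 + M" using s big by linarith
    moreover from this have "(U s)^2 > 0" using \<open>M \<ge> 0\<close> by simp
    ultimately have "(1 - s^2) * U' s < 0" using slope[OF sI] by linarith
    with \<open>1 - s^2 > 0\<close> show "U' s < 0" by (simp add: mult_less_0_iff)
  qed (use that x0 deriv in auto)
  define W where "W = (\<lambda>t. 1 / U t - artanh t / 4)"
  obtain x where x: "x \<in> {-1<..<x0}" and "artanh x \<le> artanh x0 - 4 * (1 / U x0)"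
    using artanh_le_near_minus_one[of x0 "artanh x0 - 4 * (1 / U x0)"] x0 by auto
  have "W x \<le> W x0"
  proof (rule DERIV_nonneg_imp_nondecreasing[where f = W])
    fix t assume "x \<le> t" "t \<le> x0"
    then have tI: "t \<in> {-1<..<1}" and "U t \<ge> U x0" using x x0 above by auto
    then have "U t \<ge> 8 + M" using big by linarith
    then show "\<exists>y. (W has_real_derivative y) (at t) \<and> 0 \<le> y"
      using inverse_minus_quarter_artanh_deriv_nonneg[OF _ _ deriv[OF tI] slope[OF tI]]
        tI \<open>M \<ge> 0\<close> unfolding W_def by auto
  qed (use x in auto)
  then have "1 / U x \<le> 0" using \<open>artanh x \<le> artanh x0 - 4 * (1 / U x0)\<close> unfolding W_def by linarith
  moreover have "U x > 0" using above[of x] x big \<open>M \<ge> 0\<close> by auto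
  ultimately show False by simp
qed

lemma riccati_abs_bound:
  assumes "riccati_solution Q U U'" and "M \<ge> 0"
    and "\<forall>x\<in>{-1<..<1}. \<bar>Q x\<bar> \<le> M" and "x \<in> {-1<..<1}"
  shows "\<bar>U x\<bar> \<le> 8 + M"
proof -
  have "U x \<le> 8 + M" using riccati_upper_bound assms by blast
  moreover have "- U x \<le> 8 + M"
    using riccati_upper_bound[OF riccati_solution_reflect[OF assms(1)] assms(2), of "- x"] assms(3,4)
    by auto
  ultimately show ?thesis by simp
qed

lemma abs_P_le:
  assumes "x \<in> {-1<..<1}"
  shows "\<bar>P c x\<bar> \<le> 5 * norm c"
proof -
  have term_le: "\<bar>c$i * t\<bar> \<le> norm c * b" if "\<bar>t\<bar> \<le> b" for i t b
    unfolding abs_mult using component_le_norm_cart[of c i] that by (intro mult_mono) auto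
  have "\<bar>1 - x\<bar> \<le> 2" "\<bar>1 + x\<bar> \<le> 2" "\<bar>1 - x^2\<bar> \<le> 1"
    using assms by (auto simp: abs_le_iff abs_square_le_1)
  from term_le[OF this(1), of 1] term_le[OF this(2), of 2] term_le[OF this(3), of 3]
  show ?thesis unfolding P_def by linarith
qed

theorem lemma2p2:
  fixes A :: real
  assumes "A > 0"
  shows "\<exists>C::real. \<forall>(c::real^3) (U::real \<Rightarrow> real) (U'::real \<Rightarrow> real).
           norm c \<le> A \<longrightarrow>
           (\<forall>x\<in>{-1<..<1}. (U has_real_derivative U' x) (at x)) \<longrightarrow>
           continuous_on {-1<..<1} U' \<longrightarrow>
           (\<forall>x\<in>{-1<..<1}. (1 - x^2) * U' x + 2 * x * U x + (1/2) * (U x)^2 = P c x) \<longrightarrow>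
           (\<forall>x\<in>{-1<..<1}. \<bar>U x\<bar> \<le> C)"
proof (intro exI[of _ "8 + 5 * A"] allI impI ballI)
  fix c :: "real^3" and U U' :: "real \<Rightarrow> real" and x :: real
  assume "norm c \<le> A"
    and "\<forall>x\<in>{-1<..<1}. (U has_real_derivative U' x) (at x)"
    and "continuous_on {-1<..<1} U'"
    and "\<forall>x\<in>{-1<..<1}. (1 - x^2) * U' x + 2 * x * U x + (1/2) * (U x)^2 = P c x"
    and "x \<in> {-1<..<1}"
  then have "riccati_solution (P c) U U'" by (simp add: riccati_solution_def)
  moreover have "\<forall>y\<in>{-1<..<1}. \<bar>P c y\<bar> \<le> 5 * A"
    using abs_P_le \<open>norm c \<le> A\<close> by (meson mult_left_mono order_trans zero_le_numeral)
  ultimately show "\<bar>U x\<bar> \<le> 8 + 5 * A"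
    using riccati_abs_bound[of "P c" U U' "5 * A" x] assms \<open>x \<in> {-1<..<1}\<close> by simp
qed

end
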